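(* Let $K=2$ and suppose that for every horizon $T$ (a multiple of $100$) a valid pair $(\eta,\gamma)=(\eta_T,\gamma_T)$ in the non-trivial regime is chosen. Then there exist constants $c_1,c_2,c_3>0$ and $T_0$ such that for all $T\ge T_0$, WSU-UX run on the two-phase loss sequence satisfies $$\mathbb{E}[\mathcal R_T]\ge c_1\frac1\eta+c_2\frac{\eta TK}{\gamma}+c_3\gamma T.$$
   Context: WSU-UX. Fix integers $K\ge 2$ and $T\ge 1$ and hyperparameters $\eta,\gamma$. The pair $(\eta,\gamma)$ is called valid if $\eta,\gamma\in(0,1/2)$ and $\eta K/\gamma\le 1/2$. Given a fixed loss sequence $\ell_t\in[0,1]^K$, WSU-UX sets $\pi_{1,i}=1/K$ and in each round $t$: forms $\tilde\pi_{t,i}=(1-\gamma)\pi_{t,i}+\gamma/K$; draws $I_t$ with $\Pr(I_t=i\mid\mathcal F_{t-1})=\tilde\pi_{t,i}$; sets $\hat\ell_{t,i}=\ell_{t,i}\mathbf 1[I_t=i]/\tilde\pi_{t,i}$; and updates $\pi_{t+1,i}=\pi_{t,i}\bigl(1-\eta(\hat\ell_{t,i}-\sum_{j}\pi_{t,j}\hat\ell_{t,j})\bigr)$; $\mathcal F_t$ is the history generated by $I_1,\dots,I_t$. The regret is $\mathbb{E}[\mathcal R_T]=\mathbb{E}[\sum_{t}\sum_{j}\tilde\pi_{t,j}\ell_{t,j}]-\min_i\sum_t\ell_{t,i}$. Non-trivial regime: $\eta\ge T^{-2/3}$ and $\gamma\le T^{-1/3}$. Two-phase loss sequence ($K=2$,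 $T$ a multiple of $100$, $T_1=T/100$): $\ell_{t,1}=1,\ell_{t,2}=0$ for $1\le t\le T_1$ and $\ell_{t,1}=0,\ell_{t,2}=1$ for $T_1<t\le T$. *)

theory Defs
  imports Complex_Main
begin

text \<open>Arms are indexed by 0,...,K-1 (arm i of the paper is i-1 here).
  A loss sequence is a function l :: nat => nat => real, l t i = loss of arm i at round t
  (rounds t = 1,...,T). A history is the list [I_1,...,I_s] of drawn arms.\<close>

definition mix :: "nat \<Rightarrow> real \<Rightarrow> (nat \<Rightarrow> real) \<Rightarrow> (nat \<Rightarrow> real)" where
  "mix K gamma p = (\<lambda>i. (1 - gamma) * p i + gamma / real K)"

definition loss_est :: "nat \<Rightarrow> real \<Rightarrow> (nat \<Rightarrow> real) \<Rightarrow> (nat \<Rightarrow> real) \<Rightarrow> nat \<Rightarrow> (nat \<Rightarrow> real)" where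
  "loss_est K gamma p lt I = (\<lambda>i. (if i = I then lt i / mix K gamma p i else 0))"

definition wsu_update :: "nat \<Rightarrow> real \<Rightarrow> real \<Rightarrow> (nat \<Rightarrow> real) \<Rightarrow> (nat \<Rightarrow> real) \<Rightarrow> nat \<Rightarrow> (nat \<Rightarrow> real)" where
  "wsu_update K eta gamma p lt I =
     (let lh = loss_est K gamma p lt I in
      (\<lambda>i. p i * (1 - eta * (lh i - (\<Sum>j<K. p j * lh j)))))"

fun wsu_run :: "nat \<Rightarrow> real \<Rightarrow> real \<Rightarrow> (nat \<Rightarrow> nat \<Rightarrow> real) \<Rightarrow> nat \<Rightarrow> (nat \<Rightarrow> real) \<Rightarrow> nat list \<Rightarrow> (nat \<Rightarrow> real)" where
  "wsu_run K eta gamma l t p [] = p"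
| "wsu_run K eta gamma l t p (I # Is) = wsu_run K eta gamma l (Suc t) (wsu_update K eta gamma p (l t) I) Is"

fun hist_prob :: "nat \<Rightarrow> real \<Rightarrow> real \<Rightarrow> (nat \<Rightarrow> nat \<Rightarrow> real) \<Rightarrow> nat \<Rightarrow> (nat \<Rightarrow> real) \<Rightarrow> nat list \<Rightarrow> real" where
  "hist_prob K eta gamma l t p [] = 1"
| "hist_prob K eta gamma l t p (I # Is) =
     mix K gamma p I * hist_prob K eta gamma l (Suc t) (wsu_update K eta gamma p (l t) I) Is"

definition pi_init :: "nat \<Rightarrow> (nat \<Rightarrow> real)" where
  "pi_init K = (\<lambda>i. 1 / real K)"

definition histories :: "nat \<Rightarrow> nat \<Rightarrow> nat list set" where
  "histories K s = {h. set h \<subseteq> {..<K} \<and> length h = s}"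

definition exp_round_loss :: "nat \<Rightarrow> real \<Rightarrow> real \<Rightarrow> (nat \<Rightarrow> nat \<Rightarrow> real) \<Rightarrow> nat \<Rightarrow> real" where
  "exp_round_loss K eta gamma l t =
     (\<Sum>h\<in>histories K (t - 1).
        hist_prob K eta gamma l 1 (pi_init K) h *
        (\<Sum>j<K. mix K gamma (wsu_run K eta gamma l 1 (pi_init K) h) j * l t j))"

definition exp_regret :: "nat \<Rightarrow> real \<Rightarrow> real \<Rightarrow> (nat \<Rightarrow> nat \<Rightarrow> real) \<Rightarrow> nat \<Rightarrow> real" where
  "exp_regret K eta gamma l T =
     (\<Sum>t=1..T. exp_round_loss K eta gamma l t) - (MIN i\<in>{..<K}. \<Sum>t=1..T. l t i)"

definition valid_pair :: "nat \<Rightarrow> real \<Rightarrow> real \<Rightarrow> bool" where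
  "valid_pair K eta gamma \<longleftrightarrow> 0 < eta \<and> eta < 1/2 \<and> 0 < gamma \<and> gamma < 1/2 \<and> eta * real K / gamma \<le> 1/2"

definition nontrivial_regime :: "nat \<Rightarrow> real \<Rightarrow> real \<Rightarrow> bool" where
  "nontrivial_regime T eta gamma \<longleftrightarrow> eta \<ge> real T powr (-2/3) \<and> gamma \<le> real T powr (-1/3)"

definition two_phase :: "nat \<Rightarrow> nat \<Rightarrow> nat \<Rightarrow> real" where
  "two_phase T t i = (if t \<le> T div 100 then (if i = 0 then 1 else 0) else (if i = 0 then 0 else 1))"

end

theory Submission
  imports Defs "HOL-Real_Asymp.Real_Asymp"
begin

text \<open>With two arms the algorithm is a Markov chain on the weight \<open>p\<close> of the arm that
  is bad in the first phase and good in the second. In the first phase \<open>E[ln p]\<close> drops by at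
  least \<open>\<eta>(1 - p)\<close> plus a quadratic term, which is of order \<open>\<eta>\<^sup>2/\<gamma>\<close> once \<open>p\<close> has decayed
  to \<open>O(\<gamma>)\<close>; in the second phase it rises by at most \<open>\<eta>(1 - p)\<close> per round. Since the
  expected odds \<open>(1 - p)/p\<close> shrink geometrically in the long second phase, \<open>E[ln p]\<close> ends above
  its initial value \<open>-ln 2\<close>, so the second phase must pay back the first-phase drop: the weight
  left on the lossy arm costs \<open>\<Omega>(\<eta>T/\<gamma>)\<close>, uniform exploration costs \<open>\<Omega>(\<gamma>T)\<close>, and in the
  non-trivial regime \<open>1/\<eta> \<le> \<eta>T/\<gamma> + \<gamma>T\<close> by AM-GM.\<close>

lemma wsu_run_snoc:
  "wsu_run K eta gamma l t p (h @ [I]) =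
     wsu_update K eta gamma (wsu_run K eta gamma l t p h) (l (t + length h)) I"
  by (induction h arbitrary: t p) auto

lemma hist_prob_snoc:
  "hist_prob K eta gamma l t p (h @ [I]) =
     hist_prob K eta gamma l t p h * mix K gamma (wsu_run K eta gamma l t p h) I"
  by (induction h arbitrary: t p) auto

lemma histories_0: "histories K 0 = {[]}"
  by (auto simp: histories_def)

lemma histories_Suc: "histories K (Suc n) = (\<lambda>(h, I). h @ [I]) ` (histories K n \<times> {..<K})"
proof (rule set_eqI, rule iffI)
  fix x assume "x \<in> histories K (Suc n)"
  then have x: "set x \<subseteq> {..<K}" "length x = Suc n" by (auto simp: histories_def)
  then obtain h I where "x = h @ [I]" by (metis length_Suc_conv_rev)
  with x show "x \<in> (\<lambda>(h, I). h @ [I]) ` (histories K n \<times> {..<K})"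
    by (auto simp: histories_def image_iff)
qed (auto simp: histories_def)

lemma histories_SucE:
  assumes "h \<in> histories K (Suc n)"
  obtains h' I where "h = h' @ [I]" "h' \<in> histories K n" "I < K"
  using assms unfolding histories_Suc by auto

lemma sum_histories_Suc:
  "(\<Sum>h\<in>histories K (Suc n). F h) = (\<Sum>h\<in>histories K n. \<Sum>I<K. F (h @ [I]))"
proof -
  have "inj_on (\<lambda>(h, I). h @ [I]) (histories K n \<times> {..<K})"
    by (auto simp: inj_on_def)
  then have "(\<Sum>h\<in>histories K (Suc n). F h) = (\<Sum>(h, I)\<in>histories K n \<times> {..<K}. F (h @ [I]))"
    unfolding histories_Suc by (simp add: sum.reindex split_def)
  also have "\<dots> = (\<Sum>h\<in>histories K n. \<Sum>I<K. F (h @ [I]))"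
    by (simp add: sum.cartesian_product)
  finally show ?thesis .
qed

definition hist_expect ::
    "nat \<Rightarrow> real \<Rightarrow> real \<Rightarrow> (nat \<Rightarrow> nat \<Rightarrow> real) \<Rightarrow> nat \<Rightarrow> ((nat \<Rightarrow> real) \<Rightarrow> real) \<Rightarrow> real" where
  "hist_expect K eta gamma l n f =
     (\<Sum>h\<in>histories K n. hist_prob K eta gamma l 1 (pi_init K) h *
        f (wsu_run K eta gamma l 1 (pi_init K) h))"

lemma hist_expect_0: "hist_expect K eta gamma l 0 f = f (pi_init K)"
  by (simp add: hist_expect_def histories_0)

lemma hist_expect_Suc:
  "hist_expect K eta gamma l (Suc n) f =
     hist_expect K eta gamma l n
       (\<lambda>s. \<Sum>I<K. mix K gamma s I * f (wsu_update K eta gamma s (l (Suc n)) I))"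
  unfolding hist_expect_def sum_histories_Suc
  by (intro sum.cong refl)
    (auto simp: wsu_run_snoc hist_prob_snoc sum_distrib_left mult.assoc histories_def)

lemma hist_expect_add:
  "hist_expect K eta gamma l n (\<lambda>s. f s + f' s) =
     hist_expect K eta gamma l n f + hist_expect K eta gamma l n f'"
  by (simp add: hist_expect_def distrib_left sum.distrib)

lemma hist_expect_diff:
  "hist_expect K eta gamma l n (\<lambda>s. f s - f' s) =
     hist_expect K eta gamma l n f - hist_expect K eta gamma l n f'"
  by (simp add: hist_expect_def right_diff_distrib sum_subtractf)

lemma hist_expect_cmult:
  "hist_expect K eta gamma l n (\<lambda>s. c * f s) = c * hist_expect K eta gamma l n f"
  by (simp add: hist_expect_def sum_distrib_left algebra_simps)

lemma exp_round_loss_Suc: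
  "exp_round_loss K eta gamma l (Suc n) =
     hist_expect K eta gamma l n (\<lambda>s. \<Sum>j<K. mix K gamma s j * l (Suc n) j)"
  by (simp add: exp_round_loss_def hist_expect_def)

lemma sum_lessThan_split:
  fixes f :: "nat \<Rightarrow> 'a::comm_monoid_add"
  assumes "M \<le> N"
  shows "(\<Sum>n<N. f n) = (\<Sum>n<M. f n) + (\<Sum>n\<in>{M..<N}. f n)"
  using assms by (simp add: sum.union_disjoint ivl_disj_int ivl_disj_un_one(2)[symmetric])

lemma ln_one_minus_le:
  fixes x :: real
  assumes "0 \<le> x" "x \<le> 1/2"
  shows "ln (1 - x) \<le> - x - x^2 / 4"
proof -
  have half: "ln (1 - x/2) \<le> - (x/2)"
    using assms by (intro ln_one_minus_pos_upper_bound) auto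
  have pos: "0 < (1 - x) / (1 - x/2)" "0 < 1 - x/2"
    using assms by auto
  have "(1 - x) / (1 - x/2) - 1 = - (x/2) / (1 - x/2)"
    using pos by (simp add: field_simps)
  also have "\<dots> \<le> - x/2 - x^2/4"
  proof -
    have "(x/2 + x^2/4) * (1 - x/2) \<le> x/2"
      using assms by (simp add: algebra_simps power2_eq_square power3_eq_cube)
    then have "x/2 + x^2/4 \<le> (x/2) / (1 - x/2)" using pos by (subst le_divide_eq) auto
    then show ?thesis by simp
  qed
  finally have quot: "ln ((1 - x) / (1 - x/2)) \<le> - x/2 - x^2/4"
    using ln_le_minus_one[OF pos(1)] by linarith
  have "ln (1 - x) = ln (1 - x/2) + ln ((1 - x) / (1 - x/2))"
    using assms pos by (simp add: ln_mult_pos[symmetric])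
  with half quot show ?thesis by linarith
qed

lemma divide_le_divide_cross:
  fixes a b c d :: real
  assumes "0 < b" "0 < d" "a * d \<le> c * b"
  shows "a / b \<le> c / d"
  using assms by (simp add: divide_le_eq le_divide_eq mult.commute mult.left_commute)

lemma half_le_ln_2: "1/2 \<le> ln (2::real)"
proof -
  have "exp (1/2::real) \<le> 2" using real_exp_bound_lemma[of "1/2"] by simp
  then show ?thesis by (metis exp_le_cancel_iff exp_ln zero_less_numeral)
qed

definition odds :: "real \<Rightarrow> real" where
  "odds p = (1 - p) / p"

lemma neg_odds_le_ln:
  assumes "0 < p"
  shows "- odds p \<le> ln p"
proof -
  have "ln (1/p) \<le> 1/p - 1" using assms by (intro ln_le_minus_one) auto
  then show ?thesis using assms by (simp add: odds_def ln_div field_simps)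
qed

text \<open>With two arms the state is \<open>p = \<pi>\<^sub>t\<^sub>,\<^sub>1\<close>, the weight of the arm that is bad in the first
  phase. Drawing the loss-free arm leaves the state unchanged; drawing the lossy arm moves it to
  \<open>phase1_update\<close> in the first phase and to \<open>phase2_update\<close> in the second.\<close>

definition draw_prob :: "real \<Rightarrow> real \<Rightarrow> real" where
  "draw_prob gamma p = (1 - gamma) * p + gamma / 2"

definition phase1_update :: "real \<Rightarrow> real \<Rightarrow> real \<Rightarrow> real" where
  "phase1_update eta gamma p = p * (1 - eta * (1 - p) / draw_prob gamma p)"

definition phase2_update :: "real \<Rightarrow> real \<Rightarrow> real \<Rightarrow> real" where
  "phase2_update eta gamma p = p * (1 + eta * (1 - p) / (1 - draw_prob gamma p))"

definition quad_gain :: "real \<Rightarrow> real \<Rightarrow> real \<Rightarrow> real" where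
  "quad_gain eta gamma p = eta^2 * (1 - p)^2 / (4 * draw_prob gamma p)"

locale wsu_two_arm =
  fixes eta gamma :: real
  assumes valid: "valid_pair 2 eta gamma"
begin

lemma eta_pos: "0 < eta"
  and gamma_pos: "0 < gamma"
  and gamma_lt_half: "gamma < 1/2"
  and four_eta_le_gamma: "4 * eta \<le> gamma"
  using valid by (auto simp: valid_pair_def divide_le_eq)

lemma eta_lt: "eta < 1/8"
  using four_eta_le_gamma gamma_lt_half by simp

lemma draw_prob_bounds:
  assumes "0 \<le> p" "p \<le> 1"
  shows "gamma/2 \<le> draw_prob gamma p" "draw_prob gamma p \<le> 1 - gamma/2"
    "draw_prob gamma p \<le> p + gamma/2"
proof -
  have "0 \<le> (1 - gamma) * p" "(1 - gamma) * p \<le> 1 - gamma"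
    using assms gamma_lt_half by (simp_all add: mult_left_le)
  moreover have "(1 - gamma) * p \<le> p" using assms gamma_pos by (simp add: algebra_simps)
  ultimately show "gamma/2 \<le> draw_prob gamma p" "draw_prob gamma p \<le> 1 - gamma/2"
    "draw_prob gamma p \<le> p + gamma/2"
    unfolding draw_prob_def by auto
qed

context
  fixes p :: real
  assumes p_pos: "0 < p" and p_lt_1: "p < 1"
begin

lemma draw_prob_pos: "0 < draw_prob gamma p" "0 < 1 - draw_prob gamma p"
  using draw_prob_bounds[of p] p_pos p_lt_1 gamma_pos by auto

text \<open>The step sizes stay below \<open>1/2\<close> because \<open>4 \<eta> \<le> \<gamma>\<close> while both draw probabilities are
  at least \<open>\<gamma>/2\<close>.\<close>

lemma phase1_step_bounds:
  "0 \<le> eta * (1 - p) / draw_prob gamma p" "eta * (1 - p) / draw_prob gamma p \<le> 1/2"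
proof -
  have "eta * (1 - p) \<le> eta" using eta_pos p_pos by (simp add: mult_left_le)
  also have "\<dots> \<le> draw_prob gamma p / 2"
    using draw_prob_bounds[of p] p_pos p_lt_1 four_eta_le_gamma by simp
  finally show "eta * (1 - p) / draw_prob gamma p \<le> 1/2"
    using draw_prob_pos by (simp add: divide_le_eq)
  show "0 \<le> eta * (1 - p) / draw_prob gamma p"
    using draw_prob_pos eta_pos p_lt_1 by simp
qed

lemma phase2_step_bounds:
  "0 \<le> eta * (1 - p) / (1 - draw_prob gamma p)" "eta * p / (1 - draw_prob gamma p) \<le> 1/2"
proof -
  have "eta * p \<le> eta" using eta_pos p_lt_1 by (simp add: mult_left_le)
  also have "\<dots> \<le> (1 - draw_prob gamma p) / 2"
    using draw_prob_bounds[of p] p_pos p_lt_1 four_eta_le_gamma by simp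
  finally show "eta * p / (1 - draw_prob gamma p) \<le> 1/2"
    using draw_prob_pos by (simp add: divide_le_eq)
  show "0 \<le> eta * (1 - p) / (1 - draw_prob gamma p)"
    using draw_prob_pos eta_pos p_lt_1 by simp
qed

lemma phase1_update_bounds: "0 < phase1_update eta gamma p" "phase1_update eta gamma p \<le> p"
proof -
  have "0 < 1 - eta * (1 - p) / draw_prob gamma p" using phase1_step_bounds by linarith
  then show "0 < phase1_update eta gamma p" unfolding phase1_update_def using p_pos by simp
  show "phase1_update eta gamma p \<le> p"
    unfolding phase1_update_def using phase1_step_bounds p_pos by (simp add: mult_le_cancel_left1)
qed

lemma phase2_update_bounds: "p \<le> phase2_update eta gamma p" "phase2_update eta gamma p < 1"
proof -
  show "p \<le> phase2_update eta gamma p"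
    using phase2_step_bounds p_pos unfolding phase2_update_def by (simp add: mult_le_cancel_left1)
  have "1 - phase2_update eta gamma p = (1 - p) * (1 - eta * p / (1 - draw_prob gamma p))"
    using draw_prob_pos unfolding phase2_update_def by (simp add: field_simps)
  moreover have "0 < 1 - eta * p / (1 - draw_prob gamma p)" using phase2_step_bounds by linarith
  then have "0 < (1 - p) * (1 - eta * p / (1 - draw_prob gamma p))" using p_lt_1 by simp
  ultimately show "phase2_update eta gamma p < 1" by simp
qed

lemma phase1_expected_log_le:
  "draw_prob gamma p * ln (phase1_update eta gamma p) + (1 - draw_prob gamma p) * ln p
     \<le> ln p - eta * (1 - p) - quad_gain eta gamma p"
proof -
  define x where "x = eta * (1 - p) / draw_prob gamma p"
  have x: "0 \<le> x" "x \<le> 1/2" using phase1_step_bounds unfolding x_def by auto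
  have "ln (phase1_update eta gamma p) = ln p + ln (1 - x)"
    unfolding phase1_update_def x_def[symmetric] using x p_pos by (intro ln_mult_pos) auto
  then have "draw_prob gamma p * ln (phase1_update eta gamma p) + (1 - draw_prob gamma p) * ln p
      = ln p + draw_prob gamma p * ln (1 - x)"
    by (simp add: algebra_simps)
  also have "\<dots> \<le> ln p + draw_prob gamma p * (- x - x^2/4)"
    using ln_one_minus_le[OF x] draw_prob_pos by (simp add: mult_left_mono)
  also have "draw_prob gamma p * (- x - x^2/4) = - eta * (1 - p) - quad_gain eta gamma p"
    unfolding x_def quad_gain_def using draw_prob_pos by (simp add: field_simps power2_eq_square)
  finally show ?thesis by simp
qed

lemma phase2_expected_log_le:
  "draw_prob gamma p * ln p + (1 - draw_prob gamma p) * ln (phase2_update eta gamma p)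
     \<le> ln p + eta * (1 - p)"
proof -
  define y where "y = eta * (1 - p) / (1 - draw_prob gamma p)"
  have y: "0 \<le> y" using phase2_step_bounds unfolding y_def by auto
  have "ln (phase2_update eta gamma p) = ln p + ln (1 + y)"
    unfolding phase2_update_def y_def[symmetric] using y p_pos by (intro ln_mult_pos) auto
  then have "draw_prob gamma p * ln p + (1 - draw_prob gamma p) * ln (phase2_update eta gamma p)
      = ln p + (1 - draw_prob gamma p) * ln (1 + y)"
    by (simp add: algebra_simps)
  also have "\<dots> \<le> ln p + (1 - draw_prob gamma p) * y"
    using ln_add_one_self_le_self[OF y] draw_prob_pos by (simp add: mult_left_mono)
  also have "(1 - draw_prob gamma p) * y = eta * (1 - p)"
    unfolding y_def using draw_prob_pos by simp
  finally show ?thesis by simp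
qed

lemma quad_gain_nonneg: "0 \<le> quad_gain eta gamma p"
  unfolding quad_gain_def using draw_prob_pos by simp

text \<open>The bound is linear in \<open>p\<close> (it is the tangent of \<open>1 / (p + \<gamma>/2)\<close> at \<open>p = \<gamma>/2\<close>), so it
  survives taking expectations.\<close>

lemma quad_gain_ge:
  assumes "p \<le> 1/2"
  shows "eta^2/16 * (3 / (2 * gamma) - p / gamma^2) \<le> quad_gain eta gamma p"
proof -
  define z where "z = p + gamma/2"
  have z: "0 < z" "draw_prob gamma p \<le> z"
    using draw_prob_bounds[of p] p_pos p_lt_1 gamma_pos unfolding z_def by auto
  have "(3 / (2 * gamma) - p / gamma^2) * z = 1 - (p / gamma - 1/2)^2"
    using gamma_pos unfolding z_def by (simp add: field_simps power2_eq_square)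
  then have "3 / (2 * gamma) - p / gamma^2 \<le> 1 / z"
    using z by (simp add: le_divide_eq)
  also have "\<dots> \<le> 1 / draw_prob gamma p"
    using z draw_prob_pos by (simp add: frac_le)
  finally have inv: "3 / (2 * gamma) - p / gamma^2 \<le> 1 / draw_prob gamma p" .
  have "(1/2)^2 \<le> (1 - p)^2"
    using assms by (intro power_mono) auto
  then have sq: "1/4 \<le> (1 - p)^2" by (simp add: power2_eq_square)
  have "eta^2/16 * (3 / (2 * gamma) - p / gamma^2) \<le> eta^2/16 * (1 / draw_prob gamma p)"
    using inv by (intro mult_left_mono) auto
  also have "\<dots> = eta^2 * (1/4) / (4 * draw_prob gamma p)" by simp
  also have "\<dots> \<le> eta^2 * (1 - p)^2 / (4 * draw_prob gamma p)"
    using sq draw_prob_pos by (intro divide_right_mono mult_left_mono) auto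
  finally show ?thesis unfolding quad_gain_def .
qed

lemma phase1_expected_prob_le:
  assumes "p \<le> 1/2"
  shows "draw_prob gamma p * phase1_update eta gamma p + (1 - draw_prob gamma p) * p
    \<le> (1 - eta/2) * p"
proof -
  have "draw_prob gamma p * phase1_update eta gamma p + (1 - draw_prob gamma p) * p
      = p - eta * p * (1 - p)"
    unfolding phase1_update_def using draw_prob_pos by (simp add: field_simps)
  also have "\<dots> \<le> (1 - eta/2) * p"
  proof -
    have "eta * p * (1/2) \<le> eta * p * (1 - p)"
      using assms eta_pos p_pos by (intro mult_left_mono) auto
    then show ?thesis by (simp add: algebra_simps)
  qed
  finally show ?thesis .
qed

lemma phase1_expected_odds_le:
  "draw_prob gamma p * odds (phase1_update eta gamma p) + (1 - draw_prob gamma p) * odds p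
     \<le> (1 + 2 * eta) * odds p"
proof -
  define m where "m = draw_prob gamma p"
  have "2 * eta * (1 - p) \<le> 2 * eta" using eta_pos p_pos by (simp add: mult_left_le)
  then have m: "0 < m" "2 * eta * (1 - p) \<le> m"
    using draw_prob_pos draw_prob_bounds[of p] p_pos p_lt_1 four_eta_le_gamma
    unfolding m_def by auto
  have "0 \<le> eta * (1 - p)" using eta_pos p_lt_1 by simp
  then have den: "0 < m - eta * (1 - p)" using m by linarith
  have "phase1_update eta gamma p = p * (m - eta * (1 - p)) / m"
    unfolding phase1_update_def m_def[symmetric] using m by (simp add: field_simps)
  moreover have "1 - p * (m - eta * (1 - p)) / m = (1 - p) * (m + p * eta) / m"
    using m by (simp add: field_simps)
  ultimately have "odds (phase1_update eta gamma p) = (1 - p) * (m + p * eta) / (p * (m - eta * (1 - p)))"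
    unfolding odds_def using m by simp
  then have "m * odds (phase1_update eta gamma p)
      = m * ((1 - p) * (m + p * eta)) / (p * (m - eta * (1 - p)))"
    by simp
  also have "\<dots> \<le> (1 - p) * (m + 2 * eta) / p"
  proof (rule divide_le_divide_cross)
    have "(1 - p) * (m + 2 * eta) * (p * (m - eta * (1 - p))) - m * ((1 - p) * (m + p * eta)) * p
        = (1 - p) * p * (eta * (m - 2 * eta * (1 - p)))"
      by algebra
    moreover have "0 \<le> (1 - p) * p * (eta * (m - 2 * eta * (1 - p)))"
      using m eta_pos p_pos p_lt_1 by simp
    ultimately show "m * ((1 - p) * (m + p * eta)) * p \<le> (1 - p) * (m + 2 * eta) * (p * (m - eta * (1 - p)))"
      by linarith
  qed (use den p_pos in simp_all)
  also have "\<dots> = (1 + 2 * eta) * odds p - (1 - m) * odds p"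
    unfolding odds_def using p_pos by (simp add: field_simps)
  finally show ?thesis unfolding m_def by simp
qed

lemma phase2_expected_odds_le:
  "draw_prob gamma p * odds p + (1 - draw_prob gamma p) * odds (phase2_update eta gamma p)
     \<le> (1 - 2 * eta / 3) * odds p"
proof -
  define n where "n = 1 - draw_prob gamma p"
  have "2 * eta * (1 - p) \<le> 2 * eta" using eta_pos p_pos by (simp add: mult_left_le)
  then have n: "0 < n" "2 * eta * (1 - p) \<le> n"
    using draw_prob_pos draw_prob_bounds[of p] p_pos p_lt_1 four_eta_le_gamma
    unfolding n_def by auto
  have den: "0 < n + eta * (1 - p)" using n eta_pos p_lt_1 by (simp add: add_pos_nonneg)
  have "phase2_update eta gamma p = p * (n + eta * (1 - p)) / n"
    unfolding phase2_update_def n_def[symmetric] using n by (simp add: field_simps)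
  moreover have "1 - p * (n + eta * (1 - p)) / n = (1 - p) * (n - p * eta) / n"
    using n by (simp add: field_simps)
  ultimately have "odds (phase2_update eta gamma p) = (1 - p) * (n - p * eta) / (p * (n + eta * (1 - p)))"
    unfolding odds_def using n by simp
  then have "n * odds (phase2_update eta gamma p)
      = n * ((1 - p) * (n - p * eta)) / (p * (n + eta * (1 - p)))"
    by simp
  also have "\<dots> \<le> (1 - p) * (n - 2 * eta / 3) / p"
  proof (rule divide_le_divide_cross)
    have "(1 - p) * (n - 2 * eta / 3) * (p * (n + eta * (1 - p))) - n * ((1 - p) * (n - p * eta)) * p
        = (1 - p) * p * (eta / 3 * (n - 2 * eta * (1 - p)))"
      by (simp add: field_simps)
    moreover have "0 \<le> (1 - p) * p * (eta / 3 * (n - 2 * eta * (1 - p)))"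
      using n eta_pos p_pos p_lt_1 by simp
    ultimately show "n * ((1 - p) * (n - p * eta)) * p \<le> (1 - p) * (n - 2 * eta / 3) * (p * (n + eta * (1 - p)))"
      by linarith
  qed (use den p_pos in simp_all)
  also have "\<dots> = (1 - 2 * eta / 3) * odds p - (1 - n) * odds p"
    unfolding odds_def using p_pos by (simp add: field_simps)
  finally show ?thesis unfolding n_def by simp
qed

end

end

lemma sum_lessThan_2: "(\<Sum>i<(2::nat). f i) = f 0 + f 1"
  by (simp add: numeral_2_eq_2)

lemma mix_two_0: "mix 2 gamma s 0 = draw_prob gamma (s 0)"
  by (simp add: mix_def draw_prob_def)

lemma mix_two_1:
  assumes "s 1 = 1 - s 0"
  shows "mix 2 gamma s 1 = 1 - draw_prob gamma (s 0)"
proof -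
  have "mix 2 gamma s 1 = (1 - gamma) * (1 - s 0) + gamma / 2" using assms by (simp add: mix_def)
  then show ?thesis by (simp add: draw_prob_def algebra_simps)
qed

locale wsu_two_phase = wsu_two_arm +
  fixes T :: nat
begin

abbreviation T1 :: nat where "T1 \<equiv> T div 100"

abbreviation "expect \<equiv> hist_expect 2 eta gamma (two_phase T)"
abbreviation "state_after \<equiv> wsu_run 2 eta gamma (two_phase T) 1 (pi_init 2)"
abbreviation "hist_weight \<equiv> hist_prob 2 eta gamma (two_phase T) 1 (pi_init 2)"

definition state_inv :: "nat \<Rightarrow> (nat \<Rightarrow> real) \<Rightarrow> bool" where
  "state_inv n s \<longleftrightarrow> s 1 = 1 - s 0 \<and> 0 < s 0 \<and> s 0 < 1 \<and> (n \<le> T1 \<longrightarrow> s 0 \<le> 1/2)"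

lemma wsu_update_phase1:
  assumes "t \<le> T1" "s 1 = 1 - s 0" "0 < s 0" "s 0 < 1"
  shows "wsu_update 2 eta gamma s (two_phase T t) 0 0 = phase1_update eta gamma (s 0)"
    "wsu_update 2 eta gamma s (two_phase T t) 0 1 = 1 - phase1_update eta gamma (s 0)"
    "wsu_update 2 eta gamma s (two_phase T t) 1 0 = s 0"
    "wsu_update 2 eta gamma s (two_phase T t) 1 1 = 1 - s 0"
proof -
  have m: "0 < draw_prob gamma (s 0)" using draw_prob_pos assms by auto
  have s1: "s (Suc 0) = 1 - s 0" using assms by simp
  have mx: "mix 2 gamma s (Suc 0) = 1 - draw_prob gamma (s 0)" using mix_two_1[of s gamma] assms by simp
  note simps = wsu_update_def loss_est_def two_phase_def sum_lessThan_2 mix_two_0 mx s1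
  show "wsu_update 2 eta gamma s (two_phase T t) 0 0 = phase1_update eta gamma (s 0)"
    "wsu_update 2 eta gamma s (two_phase T t) 0 1 = 1 - phase1_update eta gamma (s 0)"
    using assms m by (simp_all add: simps phase1_update_def field_simps)
  show "wsu_update 2 eta gamma s (two_phase T t) 1 0 = s 0"
    "wsu_update 2 eta gamma s (two_phase T t) 1 1 = 1 - s 0"
    using assms by (simp_all add: simps)
qed

lemma wsu_update_phase2:
  assumes "\<not> t \<le> T1" "s 1 = 1 - s 0" "0 < s 0" "s 0 < 1"
  shows "wsu_update 2 eta gamma s (two_phase T t) 1 0 = phase2_update eta gamma (s 0)"
    "wsu_update 2 eta gamma s (two_phase T t) 1 1 = 1 - phase2_update eta gamma (s 0)"
    "wsu_update 2 eta gamma s (two_phase T t) 0 0 = s 0"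
    "wsu_update 2 eta gamma s (two_phase T t) 0 1 = 1 - s 0"
proof -
  have m: "0 < 1 - draw_prob gamma (s 0)" using draw_prob_pos assms by auto
  have s1: "s (Suc 0) = 1 - s 0" using assms by simp
  have mx: "mix 2 gamma s (Suc 0) = 1 - draw_prob gamma (s 0)" using mix_two_1[of s gamma] assms by simp
  note simps = wsu_update_def loss_est_def two_phase_def sum_lessThan_2 mix_two_0 mx s1
  have rest: "(1 - s 0) * (1 - eta * (1 / n - (1 - s 0) / n)) = 1 - s 0 * (1 + eta * (1 - s 0) / n)"
    if "n \<noteq> 0" for n
    using that by (simp add: field_simps)
  show "wsu_update 2 eta gamma s (two_phase T t) 1 0 = phase2_update eta gamma (s 0)"
    "wsu_update 2 eta gamma s (two_phase T t) 1 1 = 1 - phase2_update eta gamma (s 0)"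
    using assms m by (simp_all add: simps phase2_update_def rest)
  show "wsu_update 2 eta gamma s (two_phase T t) 0 0 = s 0"
    "wsu_update 2 eta gamma s (two_phase T t) 0 1 = 1 - s 0"
    using assms by (simp_all add: simps)
qed

lemma state_inv_reachable:
  "h \<in> histories 2 n \<Longrightarrow> state_inv n (state_after h) \<and> 0 \<le> hist_weight h"
proof (induction n arbitrary: h)
  case 0
  then show ?case by (simp add: histories_0 state_inv_def pi_init_def)
next
  case (Suc n)
  from Suc.prems obtain h' I where h: "h = h' @ [I]" "h' \<in> histories 2 n" "I < 2"
    by (rule histories_SucE)
  define s where "s = state_after h'"
  have IH: "state_inv n s" "0 \<le> hist_weight h'" using Suc.IH[OF h(2)] unfolding s_def by auto
  have len: "length h' = n" using h(2) by (simp add: histories_def)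
  have next_state: "state_after h = wsu_update 2 eta gamma s (two_phase T (Suc n)) I"
    unfolding h s_def by (simp add: wsu_run_snoc len)
  have "hist_weight h = hist_weight h' * mix 2 gamma s I"
    unfolding h s_def by (simp add: hist_prob_snoc)
  moreover have s: "s 1 = 1 - s 0" "0 < s 0" "s 0 < 1" using IH unfolding state_inv_def by auto
  moreover have I: "I = 0 \<or> I = 1" using h(3) by auto
  ultimately have "0 \<le> hist_weight h"
    using IH(2) draw_prob_pos[OF s(2,3)] mix_two_0[of gamma s] mix_two_1[OF s(1)] by auto
  moreover have "state_inv (Suc n) (state_after h)"
  proof (cases "Suc n \<le> T1")
    case True
    then have "s 0 \<le> 1/2" using IH unfolding state_inv_def by auto
    with I wsu_update_phase1[OF True s] phase1_update_bounds[OF s(2,3)] s show ?thesis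
      unfolding next_state state_inv_def by auto
  next
    case False
    with I wsu_update_phase2[OF False s] phase2_update_bounds[OF s(2,3)] s show ?thesis
      unfolding next_state state_inv_def by auto
  qed
  ultimately show ?case by simp
qed

lemma expect_mono:
  assumes "\<And>s. state_inv n s \<Longrightarrow> f s \<le> f' s"
  shows "expect n f \<le> expect n f'"
  unfolding hist_expect_def using state_inv_reachable assms
  by (intro sum_mono mult_left_mono) auto

lemma expect_cong:
  assumes "\<And>s. state_inv n s \<Longrightarrow> f s = f' s"
  shows "expect n f = expect n f'"
  unfolding hist_expect_def using state_inv_reachable assms by (intro sum.cong) auto

lemma expect_const: "expect n (\<lambda>s. c) = c"
proof (induction n)
  case (Suc n)
  have "expect (Suc n) (\<lambda>s. c) = expect n (\<lambda>s. \<Sum>I<2. mix 2 gamma s I * c)"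
    by (simp add: hist_expect_Suc)
  also have "\<dots> = expect n (\<lambda>s. c)"
  proof (rule expect_cong)
    fix s assume "state_inv n s"
    then have "s 1 = 1 - s 0" unfolding state_inv_def by auto
    then show "(\<Sum>I<2. mix 2 gamma s I * c) = c"
      using mix_two_0[of gamma s] mix_two_1[of s gamma]
      by (simp add: sum_lessThan_2) (simp add: algebra_simps)
  qed
  finally show ?case using Suc by simp
qed (simp add: hist_expect_0)

lemma expect_phase1_step:
  assumes "Suc n \<le> T1"
  shows "expect (Suc n) (\<lambda>s. F (s 0)) =
    expect n (\<lambda>s. draw_prob gamma (s 0) * F (phase1_update eta gamma (s 0))
                  + (1 - draw_prob gamma (s 0)) * F (s 0))"
  unfolding hist_expect_Suc
proof (rule expect_cong)
  fix s assume "state_inv n s"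
  then have s: "s 1 = 1 - s 0" "0 < s 0" "s 0 < 1" unfolding state_inv_def by auto
  show "(\<Sum>I<2. mix 2 gamma s I * F (wsu_update 2 eta gamma s (two_phase T (Suc n)) I 0)) =
      draw_prob gamma (s 0) * F (phase1_update eta gamma (s 0)) + (1 - draw_prob gamma (s 0)) * F (s 0)"
    using wsu_update_phase1[OF assms s] mix_two_0[of gamma s] mix_two_1[OF s(1)]
    by (simp add: sum_lessThan_2)
qed

lemma expect_phase2_step:
  assumes "\<not> Suc n \<le> T1"
  shows "expect (Suc n) (\<lambda>s. F (s 0)) =
    expect n (\<lambda>s. draw_prob gamma (s 0) * F (s 0)
                  + (1 - draw_prob gamma (s 0)) * F (phase2_update eta gamma (s 0)))"
  unfolding hist_expect_Suc
proof (rule expect_cong)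
  fix s assume "state_inv n s"
  then have s: "s 1 = 1 - s 0" "0 < s 0" "s 0 < 1" unfolding state_inv_def by auto
  show "(\<Sum>I<2. mix 2 gamma s I * F (wsu_update 2 eta gamma s (two_phase T (Suc n)) I 0)) =
      draw_prob gamma (s 0) * F (s 0) + (1 - draw_prob gamma (s 0)) * F (phase2_update eta gamma (s 0))"
    using wsu_update_phase2[OF assms s] mix_two_0[of gamma s] mix_two_1[OF s(1)]
    by (simp add: sum_lessThan_2)
qed

abbreviation "exp_log n \<equiv> expect n (\<lambda>s. ln (s 0))"
abbreviation "exp_prob n \<equiv> expect n (\<lambda>s. s 0)"
abbreviation "exp_odds n \<equiv> expect n (\<lambda>s. odds (s 0))"
abbreviation "exp_gain n \<equiv> expect n (\<lambda>s. quad_gain eta gamma (s 0))"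

lemma state_invD:
  assumes "state_inv n s"
  shows "0 < s 0" "s 0 < 1" "n \<le> T1 \<Longrightarrow> s 0 \<le> 1/2"
  using assms unfolding state_inv_def by auto

lemma exp_log_phase1_step:
  assumes "Suc n \<le> T1"
  shows "exp_log (Suc n) \<le> exp_log n - eta * (1 - exp_prob n) - exp_gain n"
proof -
  have "exp_log (Suc n) = expect n (\<lambda>s. draw_prob gamma (s 0) * ln (phase1_update eta gamma (s 0))
                                        + (1 - draw_prob gamma (s 0)) * ln (s 0))"
    by (rule expect_phase1_step[OF assms])
  also have "\<dots> \<le> expect n (\<lambda>s. ln (s 0) - eta * (1 - s 0) - quad_gain eta gamma (s 0))"
    by (rule expect_mono) (use phase1_expected_log_le state_invD in auto)
  also have "\<dots> = exp_log n - eta * (1 - exp_prob n) - exp_gain n"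
    by (simp add: hist_expect_diff hist_expect_cmult expect_const)
  finally show ?thesis .
qed

lemma exp_log_phase2_step:
  assumes "\<not> Suc n \<le> T1"
  shows "exp_log (Suc n) \<le> exp_log n + eta * (1 - exp_prob n)"
proof -
  have "exp_log (Suc n) = expect n (\<lambda>s. draw_prob gamma (s 0) * ln (s 0)
                                        + (1 - draw_prob gamma (s 0)) * ln (phase2_update eta gamma (s 0)))"
    by (rule expect_phase2_step[OF assms])
  also have "\<dots> \<le> expect n (\<lambda>s. ln (s 0) + eta * (1 - s 0))"
    by (rule expect_mono) (use phase2_expected_log_le state_invD in auto)
  also have "\<dots> = exp_log n + eta * (1 - exp_prob n)"
    by (simp add: hist_expect_add hist_expect_diff hist_expect_cmult expect_const)
  finally show ?thesis .
qed

lemma exp_prob_phase1_step: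
  assumes "Suc n \<le> T1"
  shows "exp_prob (Suc n) \<le> (1 - eta/2) * exp_prob n"
proof -
  have "exp_prob (Suc n) = expect n (\<lambda>s. draw_prob gamma (s 0) * phase1_update eta gamma (s 0)
                                        + (1 - draw_prob gamma (s 0)) * s 0)"
    by (rule expect_phase1_step[OF assms])
  also have "\<dots> \<le> expect n (\<lambda>s. (1 - eta/2) * s 0)"
    by (rule expect_mono) (use phase1_expected_prob_le state_invD assms in auto)
  finally show ?thesis by (simp add: hist_expect_cmult)
qed

lemma exp_odds_phase1_step:
  assumes "Suc n \<le> T1"
  shows "exp_odds (Suc n) \<le> (1 + 2 * eta) * exp_odds n"
proof -
  have "exp_odds (Suc n) = expect n (\<lambda>s. draw_prob gamma (s 0) * odds (phase1_update eta gamma (s 0))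
                                        + (1 - draw_prob gamma (s 0)) * odds (s 0))"
    by (rule expect_phase1_step[OF assms])
  also have "\<dots> \<le> expect n (\<lambda>s. (1 + 2 * eta) * odds (s 0))"
    by (rule expect_mono) (use phase1_expected_odds_le state_invD in auto)
  finally show ?thesis by (simp add: hist_expect_cmult)
qed

lemma exp_odds_phase2_step:
  assumes "\<not> Suc n \<le> T1"
  shows "exp_odds (Suc n) \<le> (1 - 2 * eta / 3) * exp_odds n"
proof -
  have "exp_odds (Suc n) = expect n (\<lambda>s. draw_prob gamma (s 0) * odds (s 0)
                                        + (1 - draw_prob gamma (s 0)) * odds (phase2_update eta gamma (s 0)))"
    by (rule expect_phase2_step[OF assms])
  also have "\<dots> \<le> expect n (\<lambda>s. (1 - 2 * eta / 3) * odds (s 0))"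
    by (rule expect_mono) (use phase2_expected_odds_le state_invD in auto)
  finally show ?thesis by (simp add: hist_expect_cmult)
qed

lemma exp_gain_nonneg: "0 \<le> exp_gain n"
proof -
  have "expect n (\<lambda>s. 0) \<le> exp_gain n"
    by (rule expect_mono) (use quad_gain_nonneg state_invD in auto)
  then show ?thesis by (simp add: expect_const)
qed

lemma exp_gain_ge:
  assumes "n \<le> T1"
  shows "eta^2/16 * (3 / (2 * gamma) - exp_prob n / gamma^2) \<le> exp_gain n"
proof -
  have "expect n (\<lambda>s. eta^2/16 * (3 / (2 * gamma) - (1 / gamma^2) * s 0)) \<le> exp_gain n"
    by (rule expect_mono) (use quad_gain_ge state_invD assms in auto)
  then show ?thesis by (simp only: hist_expect_cmult hist_expect_diff expect_const) simp
qed

lemma neg_exp_odds_le_exp_log: "- exp_odds n \<le> exp_log n"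
proof -
  have "expect n (\<lambda>s. (-1) * odds (s 0)) \<le> exp_log n"
    by (rule expect_mono) (use neg_odds_le_ln state_invD in auto)
  then show ?thesis by (simp only: hist_expect_cmult)
qed

lemma exp_round_loss_two_phase:
  "exp_round_loss 2 eta gamma (two_phase T) (Suc n) =
     (if Suc n \<le> T1 then (1 - gamma) * exp_prob n + gamma/2
      else (1 - gamma) * (1 - exp_prob n) + gamma/2)"
proof -
  have "exp_round_loss 2 eta gamma (two_phase T) (Suc n) =
      expect n (\<lambda>s. if Suc n \<le> T1 then (1 - gamma) * s 0 + gamma/2
                     else (1 - gamma) * (1 - s 0) + gamma/2)"
    unfolding exp_round_loss_Suc
  proof (rule expect_cong)
    fix s assume "state_inv n s"
    then have "s 1 = 1 - s 0" unfolding state_inv_def by auto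
    then show "(\<Sum>j<2. mix 2 gamma s j * two_phase T (Suc n) j) =
        (if Suc n \<le> T1 then (1 - gamma) * s 0 + gamma/2 else (1 - gamma) * (1 - s 0) + gamma/2)"
      using mix_two_0[of gamma s] mix_two_1[of s gamma]
      by (simp add: sum_lessThan_2 two_phase_def draw_prob_def algebra_simps)
  qed
  then show ?thesis
    by (simp add: hist_expect_add hist_expect_diff hist_expect_cmult expect_const)
qed

text \<open>The best arm in hindsight is arm 0, with total loss \<open>T\<^sub>1\<close>.\<close>

lemma exp_regret_two_phase:
  "exp_regret 2 eta gamma (two_phase T) T =
     (1 - gamma) * ((\<Sum>n<T1. exp_prob n) + (\<Sum>n\<in>{T1..<T}. 1 - exp_prob n))
     + gamma * real T / 2 - real T1"
proof -
  have T1_le: "T1 \<le> T" by simp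
  have "(\<Sum>t=1..T. exp_round_loss 2 eta gamma (two_phase T) t) =
      (\<Sum>n<T1. (1 - gamma) * exp_prob n + gamma/2)
      + (\<Sum>n\<in>{T1..<T}. (1 - gamma) * (1 - exp_prob n) + gamma/2)"
    by (simp add: sum.atLeast1_atMost_eq sum_lessThan_split[OF T1_le] exp_round_loss_two_phase)
  also have "\<dots> = (1 - gamma) * (\<Sum>n<T1. exp_prob n) + gamma/2 * real T1
      + ((1 - gamma) * (\<Sum>n\<in>{T1..<T}. 1 - exp_prob n) + gamma/2 * real (T - T1))"
    by (simp add: sum.distrib sum_distrib_left) (simp add: field_simps)
  also have "\<dots> = (1 - gamma) * ((\<Sum>n<T1. exp_prob n) + (\<Sum>n\<in>{T1..<T}. 1 - exp_prob n))
      + gamma * real T / 2"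
    using T1_le by (simp add: of_nat_diff algebra_simps)
  finally have losses: "(\<Sum>t=1..T. exp_round_loss 2 eta gamma (two_phase T) t) = \<dots>" .
  have arm0: "(\<Sum>t=1..T. two_phase T t 0) = real T1"
    by (simp add: sum.atLeast1_atMost_eq sum_lessThan_split[OF T1_le] two_phase_def)
  have arm1: "(\<Sum>t=1..T. two_phase T t 1) = real (T - T1)"
    by (simp add: sum.atLeast1_atMost_eq sum_lessThan_split[OF T1_le] two_phase_def)
  have "{..<2::nat} = {0, 1}" by auto
  then have "(MIN i\<in>{..<2}. \<Sum>t=1..T. two_phase T t i) = real T1"
    using arm0 arm1 by simp
  then show ?thesis
    unfolding exp_regret_def losses by simp
qed

lemma exp_prob_phase1_le: "n \<le> T1 \<Longrightarrow> exp_prob n \<le> 1/2 * (1 - eta/2)^n"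
proof (induction n)
  case (Suc n)
  have "exp_prob (Suc n) \<le> (1 - eta/2) * exp_prob n"
    using exp_prob_phase1_step Suc.prems by simp
  also have "\<dots> \<le> (1 - eta/2) * (1/2 * (1 - eta/2)^n)"
    using Suc eta_lt by (intro mult_left_mono) auto
  finally show ?case by simp
qed (simp add: hist_expect_0 pi_init_def)

lemma exp_odds_phase1_le: "n \<le> T1 \<Longrightarrow> exp_odds n \<le> (1 + 2 * eta)^n"
proof (induction n)
  case (Suc n)
  have "exp_odds (Suc n) \<le> (1 + 2 * eta) * exp_odds n"
    using exp_odds_phase1_step Suc.prems by simp
  also have "\<dots> \<le> (1 + 2 * eta) * (1 + 2 * eta)^n"
    using Suc eta_pos by (intro mult_left_mono) auto
  finally show ?case by simp
qed (simp add: hist_expect_0 pi_init_def odds_def)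

lemma exp_odds_phase2_le: "exp_odds (T1 + k) \<le> (1 + 2 * eta)^T1 * (1 - 2 * eta / 3)^k"
proof (induction k)
  case (Suc k)
  have "exp_odds (T1 + Suc k) \<le> (1 - 2 * eta / 3) * exp_odds (T1 + k)"
    using exp_odds_phase2_step[of "T1 + k"] by simp
  also have "\<dots> \<le> (1 - 2 * eta / 3) * ((1 + 2 * eta)^T1 * (1 - 2 * eta / 3)^k)"
    using Suc eta_lt by (intro mult_left_mono) auto
  finally show ?case by (simp add: algebra_simps)
qed (simp add: exp_odds_phase1_le)

lemma exp_odds_final_le:
  assumes "100 dvd T" and small: "exp (- (64 * eta * real T1)) \<le> 1/2"
  shows "exp_odds T \<le> 1/2"
proof -
  have "exp_odds T = exp_odds (T1 + 99 * T1)" using assms(1) by auto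
  also have "\<dots> \<le> (1 + 2 * eta)^T1 * (1 - 2 * eta / 3)^(99 * T1)"
    by (rule exp_odds_phase2_le)
  also have "\<dots> \<le> exp (2 * eta)^T1 * exp (- (2 * eta / 3))^(99 * T1)"
    using exp_ge_add_one_self[of "2 * eta"] exp_ge_add_one_self[of "- (2 * eta / 3)"] eta_pos eta_lt
    by (intro mult_mono power_mono) auto
  also have "\<dots> = exp (- (64 * eta * real T1))"
    by (simp add: exp_of_nat_mult[symmetric] exp_add[symmetric] algebra_simps)
  finally show ?thesis using small by linarith
qed

text \<open>Telescoping the drift of \<open>E[ln \<pi>\<^sub>t\<^sub>,\<^sub>1]\<close>: it starts at \<open>-ln 2\<close> and ends above \<open>-1/2\<close>, so the
  second phase must give back what the first phase took.\<close>

lemma log_potential_balance: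
  assumes "100 dvd T" "exp (- (64 * eta * real T1)) \<le> 1/2"
  shows "eta * (\<Sum>n<T1. 1 - exp_prob n) + (\<Sum>n<T1. exp_gain n)
           \<le> eta * (\<Sum>n\<in>{T1..<T}. 1 - exp_prob n)"
proof -
  have T1_le: "T1 \<le> T" by simp
  have "exp_log T - exp_log 0 =
      (\<Sum>n<T1. exp_log (Suc n) - exp_log n) + (\<Sum>n\<in>{T1..<T}. exp_log (Suc n) - exp_log n)"
    using sum_lessThan_telescope[of "\<lambda>n. exp_log n" T]
      sum_lessThan_split[OF T1_le, of "\<lambda>n. exp_log (Suc n) - exp_log n"]
    by simp
  also have "\<dots> \<le> (\<Sum>n<T1. - (eta * (1 - exp_prob n) + exp_gain n))
      + (\<Sum>n\<in>{T1..<T}. eta * (1 - exp_prob n))"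
  proof (intro add_mono sum_mono)
    fix n assume "n \<in> {..<T1}"
    then show "exp_log (Suc n) - exp_log n \<le> - (eta * (1 - exp_prob n) + exp_gain n)"
      using exp_log_phase1_step[of n] by simp
  next
    fix n assume "n \<in> {T1..<T}"
    then show "exp_log (Suc n) - exp_log n \<le> eta * (1 - exp_prob n)"
      using exp_log_phase2_step[of n] by simp
  qed
  also have "\<dots> = - (eta * (\<Sum>n<T1. 1 - exp_prob n) + (\<Sum>n<T1. exp_gain n))
      + eta * (\<Sum>n\<in>{T1..<T}. 1 - exp_prob n)"
    by (simp only: sum_negf sum.distrib sum_distrib_left)
  finally have drift: "exp_log T - exp_log 0 \<le> \<dots>" .
  have "- (1/2) \<le> exp_log T"
    using neg_exp_odds_le_exp_log[of T] exp_odds_final_le[OF assms] by linarith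
  moreover have "exp_log 0 = - ln 2"
    by (simp add: hist_expect_0 pi_init_def ln_div)
  ultimately show ?thesis
    using drift half_le_ln_2 by linarith
qed

lemma exp_prob_late_phase1_le:
  assumes "T1 div 2 \<le> n" "n < T1" and small: "exp (- (eta * real (T1 div 2) / 2)) \<le> gamma"
  shows "exp_prob n \<le> gamma / 2"
proof -
  have "exp_prob n \<le> 1/2 * (1 - eta/2)^n"
    using exp_prob_phase1_le assms by simp
  also have "\<dots> \<le> 1/2 * (1 - eta/2)^(T1 div 2)"
    using assms eta_lt eta_pos by (intro mult_left_mono power_decreasing) auto
  also have "\<dots> \<le> 1/2 * exp (- (eta/2))^(T1 div 2)"
    using eta_lt exp_ge_add_one_self[of "- (eta/2)"] by (intro mult_left_mono power_mono) auto
  also have "\<dots> = 1/2 * exp (- (eta * real (T1 div 2) / 2))"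
    by (simp add: exp_of_nat_mult[symmetric] algebra_simps)
  finally show ?thesis using small by linarith
qed

lemma exp_gain_sum_ge:
  assumes "exp (- (eta * real (T1 div 2) / 2)) \<le> gamma"
  shows "real T1 * eta^2 / (32 * gamma) \<le> (\<Sum>n<T1. exp_gain n)"
proof -
  have late: "eta^2 / (16 * gamma) \<le> exp_gain n" if "T1 div 2 \<le> n" "n < T1" for n
  proof -
    have "eta^2 / (16 * gamma) = eta^2/16 * (3 / (2 * gamma) - (gamma/2) / gamma^2)"
      using gamma_pos by (simp add: field_simps power2_eq_square)
    also have "\<dots> \<le> eta^2/16 * (3 / (2 * gamma) - exp_prob n / gamma^2)"
      using exp_prob_late_phase1_le[OF that assms] gamma_pos
      by (intro mult_left_mono diff_left_mono divide_right_mono) auto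
    also have "\<dots> \<le> exp_gain n"
      using exp_gain_ge that by simp
    finally show ?thesis .
  qed
  have "real T1 * eta^2 / (32 * gamma) \<le> real (T1 - T1 div 2) * (eta^2 / (16 * gamma))"
  proof -
    have "real T1 / 2 \<le> real (T1 - T1 div 2)" by linarith
    then have "real T1 / 2 * (eta^2 / (16 * gamma)) \<le> real (T1 - T1 div 2) * (eta^2 / (16 * gamma))"
      using gamma_pos by (intro mult_right_mono) auto
    then show ?thesis by (simp add: field_simps)
  qed
  also have "\<dots> = (\<Sum>n\<in>{T1 div 2..<T1}. eta^2 / (16 * gamma))" by simp
  also have "\<dots> \<le> (\<Sum>n\<in>{T1 div 2..<T1}. exp_gain n)"
    using late by (intro sum_mono) auto
  also have "\<dots> \<le> (\<Sum>n<T1. exp_gain n)"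
    by (rule sum_mono2) (auto simp: exp_gain_nonneg)
  finally show ?thesis .
qed

text \<open>Exploration alone costs \<open>\<gamma>(T/2 - T\<^sub>1)\<close>, and by the balance the weight on the lossy arm
  sums to at least \<open>T\<^sub>1\<close> plus the accumulated quadratic gains divided by \<open>\<eta>\<close>.\<close>

lemma exp_regret_ge:
  assumes "100 dvd T"
    and "exp (- (eta * real (T1 div 2) / 2)) \<le> gamma"
    and "exp (- (64 * eta * real T1)) \<le> 1/2"
  shows "eta * real T / (6400 * gamma) + 49/100 * gamma * real T
           \<le> exp_regret 2 eta gamma (two_phase T) T"
proof -
  define S1 where "S1 = (\<Sum>n<T1. exp_prob n)"
  define S2 where "S2 = (\<Sum>n\<in>{T1..<T}. 1 - exp_prob n)"
  define SG where "SG = (\<Sum>n<T1. exp_gain n)"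
  have "eta * (real T1 - S1) + SG \<le> eta * S2"
    using log_potential_balance[OF assms(1,3)] unfolding S1_def S2_def SG_def
    by (simp add: sum_subtractf)
  then have "real T1 + SG / eta \<le> S1 + S2"
    using eta_pos by (simp add: field_simps)
  then have "(1 - gamma) * (real T1 + SG / eta) \<le> (1 - gamma) * (S1 + S2)"
    using gamma_lt_half by (intro mult_left_mono) auto
  moreover have "real T1 * eta / (64 * gamma) \<le> (1 - gamma) * (SG / eta)"
  proof -
    have "real T1 * eta / (32 * gamma) \<le> SG / eta"
      using exp_gain_sum_ge[OF assms(2)] eta_pos unfolding SG_def
      by (simp add: field_simps power2_eq_square)
    then have "1/2 * (real T1 * eta / (32 * gamma)) \<le> (1 - gamma) * (SG / eta)"
      using gamma_lt_half eta_pos gamma_pos by (intro mult_mono) auto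
    then show ?thesis by simp
  qed
  moreover have "exp_regret 2 eta gamma (two_phase T) T = (1 - gamma) * (S1 + S2) + gamma * real T / 2 - real T1"
    unfolding S1_def S2_def by (rule exp_regret_two_phase)
  moreover have "real T = 100 * real T1" using assms(1) by auto
  ultimately show ?thesis
    by (simp add: field_simps)
qed

end

lemma eventually_exp_neg_root_le_powr:
  "\<forall>\<^sub>F T in sequentially. exp (- (real T powr (1/3) / 800)) \<le> real T powr (-2/3)"
  by real_asymp

lemma eventually_exp_neg_root_le_half:
  "\<forall>\<^sub>F T in sequentially. exp (- (16/25 * real T powr (1/3))) \<le> 1/2"
  by real_asymp

lemma one_le_cube_mult_square:
  fixes eta x :: real
  assumes "0 < x" "x powr (-2/3) \<le> eta"
  shows "1 \<le> eta^3 * x^2"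
proof -
  have "(x powr (-2/3))^3 = x powr (real 3 * (-2/3))"
    using assms by (intro powr_power) auto
  also have "\<dots> = inverse (x^2)"
    using assms by (simp add: powr_minus powr_realpow)
  finally have "inverse (x^2) \<le> eta^3"
    using assms by (metis power_mono powr_ge_zero)
  then show ?thesis
    using assms by (simp add: field_simps)
qed

lemma powr_one_third_le_mult:
  fixes eta x :: real
  assumes "0 < x" "x powr (-2/3) \<le> eta"
  shows "x powr (1/3) \<le> eta * x"
proof -
  have "x powr (-2/3) * x = x powr (-2/3) * x powr 1"
    using assms by simp
  also have "\<dots> = x powr (-2/3 + 1)"
    by (rule powr_add[symmetric])
  also have "-2/3 + 1 = (1/3 :: real)"
    by simp
  finally have "x powr (1/3) = x powr (-2/3) * x" ..
  also have "\<dots> \<le> eta * x"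
    using assms by (intro mult_right_mono) auto
  finally show ?thesis .
qed

text \<open>AM-GM: \<open>(\<eta>x/\<gamma> + \<gamma>x)\<^sup>2 \<ge> 4\<eta>x\<^sup>2 \<ge> 1/\<eta>\<^sup>2\<close>.\<close>

lemma inverse_le_add_by_am_gm:
  fixes eta gamma x :: real
  assumes "0 < eta" "0 < gamma" "0 < x" "1 \<le> eta^3 * x^2"
  shows "1 / eta \<le> eta * x / gamma + gamma * x"
proof -
  define a b where "a = eta * x / gamma" and "b = gamma * x"
  have ab: "0 \<le> a" "0 \<le> b" "a * b = eta * x^2"
    using assms unfolding a_def b_def by (auto simp: power2_eq_square)
  have "(1 / eta)^2 \<le> eta * x^2"
    using assms by (simp add: field_simps power2_eq_square power3_eq_cube)
  also have "\<dots> \<le> 4 * (a * b)"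
    using ab mult_nonneg_nonneg[OF ab(1,2)] by linarith
  also have "\<dots> \<le> (a + b)^2"
    using zero_le_power2[of "a - b"] by (simp add: power2_eq_square algebra_simps)
  finally have "1 / eta \<le> a + b"
    by (rule power2_le_imp_le) (use ab in simp)
  then show ?thesis unfolding a_def b_def .
qed

lemma nontrivial_regime_decay_conditions:
  assumes "valid_pair 2 eta gamma" "nontrivial_regime T eta gamma" "100 dvd T" "200 \<le> T"
    and "exp (- (real T powr (1/3) / 800)) \<le> real T powr (-2/3)"
    and "exp (- (16/25 * real T powr (1/3))) \<le> 1/2"
  shows "exp (- (eta * real (T div 100 div 2) / 2)) \<le> gamma"
    and "exp (- (64 * eta * real (T div 100))) \<le> 1/2"
proof -
  interpret wsu_two_arm eta gamma by unfold_locales (rule assms(1))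
  define x where "x = real T"
  have x_pos: "0 < x" using assms(4) unfolding x_def by simp
  have eta_ge: "x powr (-2/3) \<le> eta" using assms(2) unfolding nontrivial_regime_def x_def by simp
  have root_le: "x powr (1/3) \<le> eta * x" by (rule powr_one_third_le_mult[OF x_pos eta_ge])
  have T1: "real (T div 100) = x / 100" using assms(3) unfolding x_def by auto
  then have "x / 400 \<le> real (T div 100 div 2)"
    using assms(4) unfolding x_def by linarith
  then have "eta * (x / 400) \<le> eta * real (T div 100 div 2)"
    using eta_pos by (intro mult_left_mono) auto
  then have "x powr (1/3) / 800 \<le> eta * real (T div 100 div 2) / 2"
    using root_le by simp
  then have "exp (- (eta * real (T div 100 div 2) / 2)) \<le> exp (- (x powr (1/3) / 800))"
    by simp
  also have "\<dots> \<le> x powr (-2/3)" using assms(5) unfolding x_def .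
  also have "\<dots> \<le> gamma" using eta_ge four_eta_le_gamma eta_pos by linarith
  finally show "exp (- (eta * real (T div 100 div 2) / 2)) \<le> gamma" .
  have "eta * x = 100 * (eta * real (T div 100))" using T1 by simp
  then have "16/25 * x powr (1/3) \<le> 64 * eta * real (T div 100)"
    using root_le by linarith
  then have "exp (- (64 * eta * real (T div 100))) \<le> exp (- (16/25 * x powr (1/3)))"
    by simp
  also have "\<dots> \<le> 1/2" using assms(6) unfolding x_def .
  finally show "exp (- (64 * eta * real (T div 100))) \<le> 1/2" .
qed

lemma exp_regret_ge_nontrivial_regime:
  assumes "valid_pair 2 eta gamma" "nontrivial_regime T eta gamma" "100 dvd T" "200 \<le> T"
    and "exp (- (real T powr (1/3) / 800)) \<le> real T powr (-2/3)"
    and "exp (- (16/25 * real T powr (1/3))) \<le> 1/2"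
  shows "1/25600 * (1 / eta) + 1/25600 * (eta * real T * 2 / gamma) + 1/4 * (gamma * real T)
           \<le> exp_regret 2 eta gamma (two_phase T) T"
proof -
  interpret wsu_two_phase eta gamma T by unfold_locales (rule assms(1))
  have T_pos: "0 < real T" using assms(4) by simp
  have eta_ge: "real T powr (-2/3) \<le> eta" using assms(2) unfolding nontrivial_regime_def by simp
  have "eta * real T / (6400 * gamma) + 49/100 * gamma * real T \<le> exp_regret 2 eta gamma (two_phase T) T"
    using exp_regret_ge assms(3) nontrivial_regime_decay_conditions[OF assms] by blast
  moreover have "1 / eta \<le> eta * real T / gamma + gamma * real T"
    using eta_pos gamma_pos T_pos one_le_cube_mult_square[OF T_pos eta_ge]
    by (rule inverse_le_add_by_am_gm)
  moreover have "0 \<le> eta * real T / gamma" "0 \<le> gamma * real T"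
    using eta_pos gamma_pos by simp_all
  ultimately show ?thesis by simp
qed

theorem theorem3:
  fixes eta gamma :: "nat \<Rightarrow> real"
  assumes "\<And>T. T \<ge> 1 \<Longrightarrow> 100 dvd T \<Longrightarrow>
             valid_pair 2 (eta T) (gamma T) \<and> nontrivial_regime T (eta T) (gamma T)"
  shows "\<exists>c1 c2 c3 :: real. \<exists>T0 :: nat. c1 > 0 \<and> c2 > 0 \<and> c3 > 0 \<and>
           (\<forall>T. T \<ge> T0 \<longrightarrow> T \<ge> 1 \<longrightarrow> 100 dvd T \<longrightarrow>
              exp_regret 2 (eta T) (gamma T) (two_phase T) T \<ge>
                c1 * (1 / eta T) + c2 * (eta T * real T * 2 / gamma T) + c3 * (gamma T * real T))"
proof -
  obtain N where N: "\<And>T. N \<le> T \<Longrightarrow> exp (- (real T powr (1/3) / 800)) \<le> real T powr (-2/3)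
                                  \<and> exp (- (16/25 * real T powr (1/3))) \<le> 1/2"
    using eventually_conj[OF eventually_exp_neg_root_le_powr eventually_exp_neg_root_le_half]
    unfolding eventually_sequentially by blast
  have "\<forall>T. max N 200 \<le> T \<longrightarrow> T \<ge> 1 \<longrightarrow> 100 dvd T \<longrightarrow>
          exp_regret 2 (eta T) (gamma T) (two_phase T) T \<ge>
            1/25600 * (1 / eta T) + 1/25600 * (eta T * real T * 2 / gamma T) + 1/4 * (gamma T * real T)"
  proof (intro allI impI)
    fix T :: nat
    assume "max N 200 \<le> T" "T \<ge> 1" "100 dvd T"
    with assms N show "exp_regret 2 (eta T) (gamma T) (two_phase T) T \<ge>
        1/25600 * (1 / eta T) + 1/25600 * (eta T * real T * 2 / gamma T) + 1/4 * (gamma T * real T)"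
      by (intro exp_regret_ge_nontrivial_regime) auto
  qed
  then show ?thesis
    by (intro exI[of _ "1/25600"] exI[of _ "1/25600"] exI[of _ "1/4"] exI[of _ "max N 200"]) auto
qed

end
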